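(* Let $L\ge1$, $k\ge2$ be integers with $k\mid L$, let $r$ be a positive integer, $p$ a positive integer, $l_j=(j-1)\frac Lk+1$ for $j=1,\dots,k$ and $l_{k+1}=2L$. Let $u\in\{1,\dots,k-1\}$, let $m_u$ be an $(l_{u+1}+2-l_u)$-bit string and $m'_{u+1}$ a $(2L+p+2-l_{u+1})$-bit string, and suppose that for some $s_0\in\{0,1,\dots,r-1\}$, $$\Big|m'_{u+1}-\big(\tfrac{s_0}{r}\big)_{\{l_{u+1},2L+1+p\}}\Big|<2^p,\qquad (m'_{u+1})_{[1,2]}=\big(\tfrac{s_0}{r}\big)_{\{l_{u+1},l_{u+1}+1\}},$$ and $$d_{l_{u+1}+2-l_u}\Big(m_u,\big(\tfrac{s_0}{r}\big)_{\{l_u,l_{u+1}+1\}}\Big)\le 1.$$ Then there exists $c_u\in\{-1,0,1\}$ such that (the integer formed by the last two bits of $m_u$)$+c_u\equiv (m'_{u+1})_{[1,2]}\pmod 4$, and for any such $c_u$, letting $prefix_u=(m_u+c_u)\bmod 2^{l_{u+1}+2-l_u}$ (as an $(l_{u+1}+2-l_u)$-bit string) and $m'_u=prefix_u\circ(m'_{u+1})_{[3,\,2L+p+2-l_{u+1}]}$, we have $$\Big|m'_u-\big(\tfrac{s_0}{r}\big)_{\{l_u,2L+1+p\}}\Big|<2^p\quad\text{and}\quad (m'_u)_{[1,2]}=\big(\tfrac{s_0}{r}\big)_{\{l_u,l_u+1\}}.$$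
   Context: Bit strings are identified with the binary integers they represent (most significant bit first); $\circ$ denotes concatenation of bit strings. For a bit string $x=x_1\cdots x_n$, $x_{[i,j]}=x_i\cdots x_j$. For real $\omega$ with binary fractional expansion $0.b_1b_2\cdots$ (not ending in infinitely many 1's), $\omega_{\{i,j\}}=b_i\cdots b_j$. For two $t$-bit strings $x,y$, $d_t(x,y)=\min(|x-y|,2^t-|x-y|)$. The construction of $m'_u$ from $m_u$ and $m'_{u+1}$ is one step of the classical correction procedure CombineResults. *)

theory Defs
  imports Complex_Main
begin

text \<open>Bit strings are integers; a t-bit string x satisfies 0 \<le> x < 2^t.\<close>

definition is_bits :: "nat \<Rightarrow> int \<Rightarrow> bool" where
  "is_bits t x \<longleftrightarrow> 0 \<le> x \<and> x < 2 ^ t"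

text \<open>x_{[i,j]} for an n-bit string x (bits numbered 1..n, most significant first).\<close>
definition substr :: "nat \<Rightarrow> int \<Rightarrow> nat \<Rightarrow> nat \<Rightarrow> int" where
  "substr n x i j = (x div 2 ^ (n - j)) mod 2 ^ (j + 1 - i)"

text \<open>omega_{i,j} = b_i ... b_j of the binary expansion 0.b_1 b_2 ... (not ending in
  infinitely many 1's) of a real omega in [0,1).\<close>
definition frac_bits :: "real \<Rightarrow> nat \<Rightarrow> nat \<Rightarrow> int" where
  "frac_bits \<omega> i j = \<lfloor>2 ^ j * \<omega>\<rfloor> mod 2 ^ (j + 1 - i)"

definition concat_bits :: "int \<Rightarrow> int \<Rightarrow> nat \<Rightarrow> int" where
  "concat_bits x y ny = x * 2 ^ ny + y"

definition dist_t :: "nat \<Rightarrow> int \<Rightarrow> int \<Rightarrow> int" where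
  "dist_t t x y = min \<bar>x - y\<bar> (2 ^ t - \<bar>x - y\<bar>)"

definition lpos :: "nat \<Rightarrow> nat \<Rightarrow> nat \<Rightarrow> nat" where
  "lpos L k j = (if j = k + 1 then 2 * L else (j - 1) * (L div k) + 1)"

end

(* Let T be the block of bits l_u .. l_{u+1}+1 of s0/r. The distance bound on m_u yields a carry
   e in {-1,0,1} with (m_u + e) mod 2^(l_{u+1}+2-l_u) = T. The last two bits of T are the first
   two bits of the next block, which m'_{u+1} carries exactly; since the elements of {-1,0,1} are
   distinct mod 4, e is the only admissible c, so prefix_u = T. Then m'_u and the target block
   l_u .. 2L+1+p share the leading bits T, and their trailing bits are those of m'_{u+1} and of
   its target block, so the error is inherited from m'_{u+1}. *)

theory Submission
  imports Defs
begin

lemma floor_pow2_mult_div: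
  "\<lfloor>2 ^ (j + t) * (w::real)\<rfloor> div 2 ^ t = \<lfloor>2 ^ j * w\<rfloor>"
proof -
  have "\<lfloor>2 ^ (j + t) * w\<rfloor> div 2 ^ t = \<lfloor>2 ^ (j + t) * w / real_of_int (2 ^ t)\<rfloor>"
    by (rule floor_divide_real_eq_div[symmetric]) simp
  also have "2 ^ (j + t) * w / real_of_int (2 ^ t) = 2 ^ j * w"
    by (simp add: power_add)
  finally show ?thesis .
qed

lemma concat_bits_div:
  assumes "0 \<le> y" "y < 2 ^ t"
  shows "concat_bits x y t div 2 ^ t = x"
  using assms unfolding concat_bits_def by simp

lemma frac_bits_append:
  assumes "i \<le> j + 1" "j \<le> N"
  shows "frac_bits w i N = concat_bits (frac_bits w i j) (frac_bits w (j + 1) N) (N - j)"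
proof -
  define X where "X = \<lfloor>2 ^ N * w\<rfloor>"
  have len: "N + 1 - i = (N - j) + (j + 1 - i)"
    using assms by simp
  have top: "X div 2 ^ (N - j) = \<lfloor>2 ^ j * w\<rfloor>"
    using floor_pow2_mult_div[of j "N - j" w] assms(2) unfolding X_def by simp
  have "frac_bits w i N = X mod (2 ^ (N - j) * 2 ^ (j + 1 - i))"
    unfolding frac_bits_def X_def len power_add ..
  also have "\<dots> = 2 ^ (N - j) * (X div 2 ^ (N - j) mod 2 ^ (j + 1 - i)) + X mod 2 ^ (N - j)"
    by (rule zmod_zmult2_eq) simp
  finally show ?thesis
    unfolding top by (simp add: concat_bits_def frac_bits_def X_def mult.commute)
qed

lemma frac_bits_prefix:
  assumes "i \<le> j + 1" "j \<le> N"
  shows "frac_bits w i N div 2 ^ (N - j) = frac_bits w i j"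
proof -
  have "0 \<le> frac_bits w (j + 1) N" "frac_bits w (j + 1) N < 2 ^ (N - j)"
    unfolding frac_bits_def by simp_all
  then show ?thesis
    unfolding frac_bits_append[OF assms, of w] by (rule concat_bits_div)
qed

lemma substr_first_two:
  assumes "is_bits n x"
  shows "substr n x 1 2 = x div 2 ^ (n - 2)"
proof (cases "2 \<le> n")
  case True
  then have "(2::int) ^ n = 2 ^ (n - 2) * 4"
    by (metis le_add_diff_inverse2 power_add power2_eq_square numeral_Bit0 mult_2)
  then have "x div 2 ^ (n - 2) div 4 = 0"
    using assms unfolding is_bits_def by (simp add: zdiv_zmult2_eq[symmetric])
  moreover have "0 \<le> x div 2 ^ (n - 2)"
    using assms unfolding is_bits_def by (simp add: pos_imp_zdiv_nonneg_iff)
  ultimately have "x div 2 ^ (n - 2) < 4"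
    by (auto simp: zdiv_eq_0_iff)
  with \<open>0 \<le> x div 2 ^ (n - 2)\<close> show ?thesis
    unfolding substr_def by simp
next
  case False
  then have "n = 0 \<or> n = 1"
    by linarith
  with assms show ?thesis
    unfolding substr_def is_bits_def by auto
qed

lemma substr_after_two: "substr n x 3 n = x mod 2 ^ (n - 2)"
  unfolding substr_def by (simp add: numeral_3_eq_3 numeral_2_eq_2)

lemma frac_bits_suffix:
  assumes "i \<le> j"
  shows "frac_bits w i N mod 2 ^ (N + 1 - j) = frac_bits w j N"
proof -
  have "(2::int) ^ (N + 1 - j) dvd 2 ^ (N + 1 - i)"
    using assms by (simp add: le_imp_power_dvd)
  then show ?thesis
    unfolding frac_bits_def by (simp add: mod_mod_cancel)
qed

lemma dist_t_le_1_imp_carry: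
  assumes "is_bits t x" "is_bits t y" "dist_t t x y \<le> 1"
  shows "\<exists>c \<in> {-1, 0, 1}. (x + c) mod 2 ^ t = y"
proof -
  have "min \<bar>x - y\<bar> (2 ^ t - \<bar>x - y\<bar>) \<le> 1" "\<bar>x - y\<bar> < 2 ^ t"
    using assms unfolding dist_t_def is_bits_def by auto
  then consider "\<bar>x - y\<bar> \<le> 1" | "x + 1 = y + 2 ^ t" | "x - 1 = y - 2 ^ t"
    unfolding min_def by (cases "\<bar>x - y\<bar> \<le> 2 ^ t - \<bar>x - y\<bar>"; simp; arith)
  then show ?thesis
  proof cases
    case 1
    then have "y - x \<in> {-1, 0, 1}"
      by auto
    with assms(2) show ?thesis
      unfolding is_bits_def by force
  next
    case 2
    then have "(x + 1) mod 2 ^ t = y"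
      using assms(2) unfolding is_bits_def by simp
    then show ?thesis
      by blast
  next
    case 3
    then have "(x + -1) mod 2 ^ t = y"
      using assms(2) unfolding is_bits_def by (simp add: minus_mod_self2)
    then show ?thesis
      by blast
  qed
qed

lemma carry_mod_4_unique:
  fixes x c e :: int
  assumes "c \<in> {-1, 0, 1}" "e \<in> {-1, 0, 1}" "(x + c) mod 4 = (x + e) mod 4"
  shows "c = e"
  using assms by (auto simp: mod_eq_dvd_iff)

lemma combine_step_error:
  fixes m B :: int
  assumes "a \<le> b + 2" "b < N"
    and "m div 2 ^ (N - 1 - b) = frac_bits w b (b + 1)"
    and "\<bar>m - frac_bits w b N\<bar> < B"
  shows "\<bar>concat_bits (frac_bits w a (b + 1)) (m mod 2 ^ (N - 1 - b)) (N - 1 - b)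
            - frac_bits w a N\<bar> < B"
proof -
  have "frac_bits w a N
      = concat_bits (frac_bits w a (b + 1)) (frac_bits w (b + 2) N) (N - 1 - b)"
    using frac_bits_append[of a "b + 1" N w] assms(1,2) by simp
  moreover have "frac_bits w b N
      = concat_bits (frac_bits w b (b + 1)) (frac_bits w (b + 2) N) (N - 1 - b)"
    using frac_bits_append[of b "b + 1" N w] assms(2) by simp
  moreover have "m = concat_bits (frac_bits w b (b + 1)) (m mod 2 ^ (N - 1 - b)) (N - 1 - b)"
    unfolding concat_bits_def assms(3)[symmetric] by (rule div_mult_mod_eq[symmetric])
  ultimately show ?thesis
    using assms(4) unfolding concat_bits_def by linarith
qed

lemma combine_step_first_two:
  fixes y :: int
  assumes "a \<le> b" "0 \<le> y" "y < 2 ^ t"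
  shows "substr (t + 2 + b - a) (concat_bits (frac_bits w a (b + 1)) y t) 1 2
       = frac_bits w a (a + 1)"
proof -
  have "concat_bits (frac_bits w a (b + 1)) y t div 2 ^ (t + (b - a))
      = concat_bits (frac_bits w a (b + 1)) y t div 2 ^ t div 2 ^ (b + 1 - (a + 1))"
    unfolding power_add by (simp add: zdiv_zmult2_eq)
  also have "\<dots> = frac_bits w a (b + 1) div 2 ^ (b + 1 - (a + 1))"
    using assms(2,3) by (simp only: concat_bits_div)
  also have "\<dots> = frac_bits w a (a + 1)"
    using assms(1) by (intro frac_bits_prefix) simp_all
  finally show ?thesis
    using assms(1) unfolding substr_def by (simp add: frac_bits_def)
qed

lemma combine_results_step:
  fixes w :: real and a b N :: nat and mu m B :: int
  assumes "a \<le> b" "b < N"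
    and "is_bits (b + 2 - a) mu"
    and "is_bits (N + 1 - b) m"
    and "\<bar>m - frac_bits w b N\<bar> < B"
    and "substr (N + 1 - b) m 1 2 = frac_bits w b (b + 1)"
    and "dist_t (b + 2 - a) mu (frac_bits w a (b + 1)) \<le> 1"
  shows "(\<exists>c \<in> {-1, 0, 1::int}. (mu mod 4 + c) mod 4 = substr (N + 1 - b) m 1 2 mod 4)
       \<and> (\<forall>c \<in> {-1, 0, 1::int}. (mu mod 4 + c) mod 4 = substr (N + 1 - b) m 1 2 mod 4 \<longrightarrow>
            (let prefix = (mu + c) mod 2 ^ (b + 2 - a);
                 suffix = substr (N + 1 - b) m 3 (N + 1 - b);
                 m' = concat_bits prefix suffix (N - 1 - b)
             in \<bar>m' - frac_bits w a N\<bar> < B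
                \<and> substr (N + 1 - a) m' 1 2 = frac_bits w a (a + 1)))"
proof -
  define T where "T = frac_bits w a (b + 1)"
  have "is_bits (b + 2 - a) T"
    unfolding T_def frac_bits_def is_bits_def by simp
  then obtain e where e: "e \<in> {-1, 0, 1}" "(mu + e) mod 2 ^ (b + 2 - a) = T"
    using dist_t_le_1_imp_carry assms(3,7) unfolding T_def by blast
  have "b + 2 - a = (b - a) + 2"
    using assms(1) by simp
  then have "(4::int) dvd 2 ^ (b + 2 - a)"
    by (simp only: power_add) simp
  then have "(mu + e) mod 4 = T mod 4"
    using e(2) by (metis mod_mod_cancel)
  also have "\<dots> = substr (N + 1 - b) m 1 2"
    using frac_bits_suffix[of a b w "b + 1"] assms(1,6) unfolding T_def by simp
  finally have top: "(mu mod 4 + e) mod 4 = substr (N + 1 - b) m 1 2 mod 4"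
    by (simp add: mod_add_left_eq)
  have "(let prefix = (mu + c) mod 2 ^ (b + 2 - a);
             suffix = substr (N + 1 - b) m 3 (N + 1 - b);
             m' = concat_bits prefix suffix (N - 1 - b)
         in \<bar>m' - frac_bits w a N\<bar> < B
            \<and> substr (N + 1 - a) m' 1 2 = frac_bits w a (a + 1))"
    if "c \<in> {-1, 0, 1}" "(mu mod 4 + c) mod 4 = substr (N + 1 - b) m 1 2 mod 4" for c
  proof -
    have "c = e"
      using carry_mod_4_unique[of c e mu] that e(1) top by (simp add: mod_add_left_eq)
    moreover have "m div 2 ^ (N - 1 - b) = frac_bits w b (b + 1)"
      using substr_first_two[OF assms(4)] assms(6) by simp
    moreover have "N - 1 - b + 2 + b - a = N + 1 - a"
      using assms(1,2) by simp
    ultimately show ?thesis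
      using e(2) assms(1,2,5) combine_step_error[of a b N m w B]
        combine_step_first_two[of a b "m mod 2 ^ (N - 1 - b)" "N - 1 - b" w]
      by (simp add: T_def substr_after_two Let_def)
  qed
  then show ?thesis
    using e(1) top by blast
qed

lemma lpos_Suc:
  assumes "1 \<le> u" "u < k"
  shows "lpos L k (u + 1) = lpos L k u + L div k"
  using assms by (cases u) (auto simp: lpos_def)

lemma lpos_Suc_le:
  assumes "u < k"
  shows "lpos L k (u + 1) \<le> L + 1"
proof -
  have "u * (L div k) \<le> k * (L div k)"
    using assms by simp
  also have "\<dots> \<le> L"
    by simp
  finally show ?thesis
    using assms by (simp add: lpos_def)
qed

theorem proposition4:
  fixes L k r p u s0 :: nat and m_u m'_u1 :: int
  assumes "L \<ge> 1" and "k \<ge> 2" and "k dvd L" and "r > 0" and "p > 0"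
    and "1 \<le> u" and "u \<le> k - 1"
    and "is_bits (lpos L k (u+1) + 2 - lpos L k u) m_u"
    and "is_bits (2*L + p + 2 - lpos L k (u+1)) m'_u1"
    and "s0 < r"
    and "\<bar>m'_u1 - frac_bits (real s0 / real r) (lpos L k (u+1)) (2*L+1+p)\<bar> < 2 ^ p"
    and "substr (2*L + p + 2 - lpos L k (u+1)) m'_u1 1 2
           = frac_bits (real s0 / real r) (lpos L k (u+1)) (lpos L k (u+1) + 1)"
    and "dist_t (lpos L k (u+1) + 2 - lpos L k u) m_u
           (frac_bits (real s0 / real r) (lpos L k u) (lpos L k (u+1) + 1)) \<le> 1"
  shows "(\<exists>c \<in> {-1, 0, 1::int}. (m_u mod 4 + c) mod 4
              = substr (2*L + p + 2 - lpos L k (u+1)) m'_u1 1 2 mod 4)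
       \<and> (\<forall>c \<in> {-1, 0, 1::int}. (m_u mod 4 + c) mod 4
              = substr (2*L + p + 2 - lpos L k (u+1)) m'_u1 1 2 mod 4 \<longrightarrow>
            (let n\<^sub>u = lpos L k (u+1) + 2 - lpos L k u;
                 prefix = (m_u + c) mod 2 ^ n\<^sub>u;
                 suffix = substr (2*L + p + 2 - lpos L k (u+1)) m'_u1 3
                            (2*L + p + 2 - lpos L k (u+1));
                 m'_u = concat_bits prefix suffix (2*L + p - lpos L k (u+1))
             in \<bar>m'_u - frac_bits (real s0 / real r) (lpos L k u) (2*L+1+p)\<bar> < 2 ^ p
                \<and> substr (2*L + p + 2 - lpos L k u) m'_u 1 2
                    = frac_bits (real s0 / real r) (lpos L k u) (lpos L k u + 1)))"
proof -
  define a where "a = lpos L k u"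
  define b where "b = lpos L k (u + 1)"
  have "u < k"
    using assms(2,7) by simp
  then have "a \<le> b" "b < 2 * L + 1 + p"
    using lpos_Suc[OF assms(6)] lpos_Suc_le[of u k L] assms(1) unfolding a_def b_def by auto
  moreover have lengths: "2 * L + 1 + p + 1 - b = 2 * L + p + 2 - b"
    "2 * L + 1 + p - 1 - b = 2 * L + p - b" "2 * L + 1 + p + 1 - a = 2 * L + p + 2 - a"
    by simp_all
  ultimately show ?thesis
    using combine_results_step[of a b "2 * L + 1 + p" m_u m'_u1 "real s0 / real r" "2 ^ p",
        unfolded lengths Let_def] assms(8,9,11-13)
    unfolding a_def[symmetric] b_def[symmetric] Let_def by blast
qed

end
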